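(* Let $\mathcal H$ be a Hilbert space of finite dimension $N$, and let $\lambda\mapsto \hat H(\lambda)$ ($\lambda\in\mathbb R$) be a family of Hermitian operators on $\mathcal H$. Let $\lambda:[0,\tau]\to\mathbb R$, $t\mapsto\lambda_t$, be a protocol (regular enough for the equation below to have a solution), and let $U_t$ be the unitary evolution defined by $$ i\hbar\,\frac{\partial}{\partial t}U_t=\hat H(\lambda_t)\,U_t,\qquad U_0=\mathbb 1 .$$ For each $\lambda$, let $\{|\psi_k^\lambda\rangle\}_{k=1}^N$ be an orthonormal eigenbasis of $\hat H(\lambda)$, $\hat H(\lambda)|\psi_k^\lambda\rangle=\varepsilon_k(\lambda)|\psi_k^\lambda\rangle$, labelled so that $\varepsilon_k(\lambda_t)\ge\varepsilon_m(\lambda_t)$ whenever $k>m$, for all $t\in[0,\tau]$ (degeneracies are allowed). For $k\in\{1,\dots,N\}$ let $$A_k(\lambda)=\{q\in\{1,\dots,N\}:\ \varepsilon_q(\lambda)=\varepsilon_k(\lambda)\},\qquad g_k(\lambda)=\operatorname{card}A_k(\lambda),$$ $$\mathcal N_k(\lambda)=\Big[\prod_{q\in A_k(\lambda)} q\Big]^{1/g_k(\lambda)},\qquad \hat S(\lambda)=\sum_{k=1}^N \ln\mathcal N_k(\lambda)\,|\psi_k^\lambda\rangle\langle\psi_k^\lambda| .$$ Suppose there is a probability distribution $\{p_k\}_{k=1}^N$ such that $p_k=p_m$ for all $k,m$ with $m\in A_k(\lambda_0)$, $p_k\le p_m$ whenever $k>m$, and the initial state is $$\rho(0)=\sum_{k=1}^N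 p_k\,|\psi_k^{\lambda_0}\rangle\langle\psi_k^{\lambda_0}| .$$ Let $\rho(t)=U_t\rho(0)U_t^\dagger$ and $S(t)=\operatorname{Tr}\big[\rho(t)\,\hat S(\lambda_t)\big]$. Then $$S(\tau)\ge S(0).$$
   Context: $\hat S(\lambda)$ is called the (quantum) volume entropy operator; $\mathcal N_k(\lambda)$ is the geometric mean of the labels in the degenerate set $A_k(\lambda)$, so that $\ln\mathcal N_k(\lambda)$ is the arithmetic mean of $\ln q$ over $q\in A_k(\lambda)$. In the non-degenerate case $\mathcal N_k(\lambda)=k$. *)

theory Defs
  imports Complex_Main "Jordan_Normal_Form.Schur_Decomposition"
begin

(* Hilbert space = C^N, vectors/matrices from Jordan_Normal_Form; labels k range over {1..N}. *)

definition hermitian_mat :: "nat \<Rightarrow> complex mat \<Rightarrow> bool" where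
  "hermitian_mat N A \<longleftrightarrow> A \<in> carrier_mat N N \<and> mat_adjoint A = A"

(* sum_k c k |v_k><v_k| for k = 1..N *)
definition spectral_sum :: "nat \<Rightarrow> (nat \<Rightarrow> complex) \<Rightarrow> (nat \<Rightarrow> complex vec) \<Rightarrow> complex mat" where
  "spectral_sum N c v = mat N N (\<lambda>(i,j). \<Sum>k=1..N. c k * (v k $ i) * cnj (v k $ j))"

definition mat_has_derivative_within ::
  "nat \<Rightarrow> (real \<Rightarrow> complex mat) \<Rightarrow> complex mat \<Rightarrow> real \<Rightarrow> real set \<Rightarrow> bool" where
  "mat_has_derivative_within N U D t T \<longleftrightarrow>
     D \<in> carrier_mat N N \<and>
     (\<forall>i<N. \<forall>j<N. ((\<lambda>s. U s $$ (i,j)) has_vector_derivative (D $$ (i,j))) (at t within T))"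

definition degset :: "nat \<Rightarrow> (real \<Rightarrow> nat \<Rightarrow> real) \<Rightarrow> real \<Rightarrow> nat \<Rightarrow> nat set" where
  "degset N eps l k = {q \<in> {1..N}. eps l q = eps l k}"

definition degeneracy :: "nat \<Rightarrow> (real \<Rightarrow> nat \<Rightarrow> real) \<Rightarrow> real \<Rightarrow> nat \<Rightarrow> nat" where
  "degeneracy N eps l k = card (degset N eps l k)"

definition geomlabel :: "nat \<Rightarrow> (real \<Rightarrow> nat \<Rightarrow> real) \<Rightarrow> real \<Rightarrow> nat \<Rightarrow> real" where
  "geomlabel N eps l k =
     (\<Prod>q\<in>degset N eps l k. real q) powr (1 / real (degeneracy N eps l k))"

definition mat_trace :: "complex mat \<Rightarrow> complex" where
  "mat_trace A = (\<Sum>i<dim_row A. A $$ (i,i))"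

definition entropy_op :: "nat \<Rightarrow> (real \<Rightarrow> nat \<Rightarrow> real) \<Rightarrow> (real \<Rightarrow> nat \<Rightarrow> complex vec) \<Rightarrow> real \<Rightarrow> complex mat" where
  "entropy_op N eps psi l = spectral_sum N (\<lambda>k. complex_of_real (ln (geomlabel N eps l k))) (psi l)"

end

theory Submission
  imports Defs
begin

text \<open>
  The Schroedinger equation with Hermitian \<open>H\<close> makes \<open>U\<^sub>\<tau>\<close> unitary, so
  \<open>\<rho>(\<tau>) = \<Sum>\<^sub>k p\<^sub>k |U\<^sub>\<tau>\<psi>\<^sub>k\<^sup>0\<rangle>\<langle>U\<^sub>\<tau>\<psi>\<^sub>k\<^sup>0|\<close> and
  \<open>S(\<tau>) = \<Sum>\<^sub>m ln \<N>\<^sub>m (D p)\<^sub>m\<close> with the doubly stochastic transition matrix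
  \<open>D\<^sub>m\<^sub>k = |\<langle>\<psi>\<^sub>m\<^sup>\<tau>|U\<^sub>\<tau>\<psi>\<^sub>k\<^sup>0\<rangle>|\<^sup>2\<close>.
  Since \<open>ln \<N>\<^sub>m\<close> is the mean of \<open>ln q\<close> over the degenerate set of \<open>m\<close>, this equals
  \<open>\<Sum>\<^sub>q ln q (M p)\<^sub>q\<close>, where \<open>M\<close> averages the rows of \<open>D\<close> over degenerate sets and is
  again doubly stochastic; as \<open>p\<close> is constant on the degenerate sets at \<open>\<lambda>\<^sub>0\<close>,
  likewise \<open>S(0) = \<Sum>\<^sub>q ln q p\<^sub>q\<close>. Finally, for increasing \<open>x\<close> and nonincreasing
  nonnegative \<open>p\<close>, every doubly stochastic \<open>M\<close> satisfies
  \<open>\<Sum>\<^sub>q x\<^sub>q p\<^sub>q \<le> \<Sum>\<^sub>q x\<^sub>q (M p)\<^sub>q\<close> (Abel summation).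
\<close>

lemma index_mult_mat_sum:
  fixes A B :: "'a :: semiring_0 mat"
  assumes "A \<in> carrier_mat n m" "B \<in> carrier_mat m k" "i < n" "j < k"
  shows "(A * B) $$ (i,j) = (\<Sum>l<m. A $$ (i,l) * B $$ (l,j))"
  using assms by (auto simp: scalar_prod_def intro!: sum.cong)

lemma index_mult_mat_vec_sum:
  fixes A :: "'a :: semiring_0 mat"
  assumes "A \<in> carrier_mat n m" "v \<in> carrier_vec m" "i < n"
  shows "(A *\<^sub>v v) $ i = (\<Sum>l<m. A $$ (i,l) * v $ l)"
  using assms by (auto simp: scalar_prod_def intro!: sum.cong)

lemma cscalar_prod_sum:
  fixes v w :: "complex vec"
  assumes "v \<in> carrier_vec n" "w \<in> carrier_vec n"
  shows "v \<bullet>c w = (\<Sum>i<n. v $ i * cnj (w $ i))"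
  using assms unfolding scalar_prod_def by (auto intro!: sum.cong)

lemma cmod_cscalar_prod_commute:
  fixes v w :: "complex vec"
  assumes "v \<in> carrier_vec n" "w \<in> carrier_vec n"
  shows "cmod (v \<bullet>c w) = cmod (w \<bullet>c v)"
proof -
  have "v \<bullet>c w = cnj (w \<bullet>c v)"
    using assms by (simp add: cscalar_prod_sum mult.commute)
  then show ?thesis by simp
qed

lemma dim_row_mat_adjoint [simp]: "dim_row (mat_adjoint A) = dim_col A"
  and dim_col_mat_adjoint [simp]: "dim_col (mat_adjoint A) = dim_row A"
  unfolding mat_adjoint_def by simp_all

lemma index_mat_adjoint [simp]:
  fixes A :: "complex mat"
  assumes "i < dim_col A" "j < dim_row A"
  shows "mat_adjoint A $$ (i,j) = cnj (A $$ (j,i))"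
proof -
  have "mat_adjoint A $$ (i,j) = map conjugate (cols A) ! i $ j"
    unfolding mat_adjoint_def by (rule mat_of_rows_index) (use assms in simp_all)
  then show ?thesis using assms by simp
qed

lemma mat_adjoint_carrier:
  "A \<in> carrier_mat n m \<Longrightarrow> mat_adjoint A \<in> carrier_mat m n"
  unfolding carrier_mat_def by simp

lemma mat_adjoint_mat_adjoint [simp]:
  fixes A :: "complex mat"
  shows "mat_adjoint (mat_adjoint A) = A"
  by (rule eq_matI) simp_all

lemma mat_adjoint_one [simp]: "mat_adjoint (1\<^sub>m n :: complex mat) = 1\<^sub>m n"
  by (rule eq_matI) simp_all

lemma cscalar_prod_mult_mat_vec:
  fixes A :: "complex mat"
  assumes A: "A \<in> carrier_mat n m" and v: "v \<in> carrier_vec m" and w: "w \<in> carrier_vec n"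
  shows "(A *\<^sub>v v) \<bullet>c w = v \<bullet>c (mat_adjoint A *\<^sub>v w)"
proof -
  have Ah: "mat_adjoint A \<in> carrier_mat m n" using mat_adjoint_carrier[OF A] .
  have "(A *\<^sub>v v) \<bullet>c w = (\<Sum>i<n. \<Sum>l<m. A $$ (i,l) * v $ l * cnj (w $ i))"
    using A v w by (simp add: cscalar_prod_sum[of _ n] index_mult_mat_vec_sum sum_distrib_right del: index_mult_mat_vec)
  also have "\<dots> = (\<Sum>l<m. \<Sum>i<n. A $$ (i,l) * v $ l * cnj (w $ i))"
    by (rule sum.swap)
  also have "\<dots> = v \<bullet>c (mat_adjoint A *\<^sub>v w)"
    using A Ah v w
    by (simp add: cscalar_prod_sum[of _ m] index_mult_mat_vec_sum sum_distrib_left mult_ac del: index_mult_mat_vec)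
  finally show ?thesis .
qed

definition unitary_mat :: "nat \<Rightarrow> complex mat \<Rightarrow> bool" where
  "unitary_mat n X \<longleftrightarrow> X \<in> carrier_mat n n \<and> mat_adjoint X * X = 1\<^sub>m n"

lemma unitary_mat_adjoint:
  assumes "unitary_mat n X"
  shows "unitary_mat n (mat_adjoint X)"
proof -
  have X: "X \<in> carrier_mat n n" and XhX: "mat_adjoint X * X = 1\<^sub>m n"
    using assms unfolding unitary_mat_def by auto
  have "X * mat_adjoint X = 1\<^sub>m n"
    by (rule mat_mult_left_right_inverse[OF mat_adjoint_carrier[OF X] X XhX])
  then show ?thesis using X unfolding unitary_mat_def by (simp add: mat_adjoint_carrier)
qed

lemma unitary_cscalar_prod:
  assumes X: "unitary_mat n X" and v: "v \<in> carrier_vec n" and w: "w \<in> carrier_vec n"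
  shows "(X *\<^sub>v v) \<bullet>c (X *\<^sub>v w) = v \<bullet>c w"
proof -
  have Xc: "X \<in> carrier_mat n n" and XhX: "mat_adjoint X * X = 1\<^sub>m n"
    using X unfolding unitary_mat_def by auto
  have "(X *\<^sub>v v) \<bullet>c (X *\<^sub>v w) = v \<bullet>c (mat_adjoint X *\<^sub>v (X *\<^sub>v w))"
    using Xc v w by (simp add: cscalar_prod_mult_mat_vec)
  also have "\<dots> = v \<bullet>c ((mat_adjoint X * X) *\<^sub>v w)"
    using assoc_mult_mat_vec[OF mat_adjoint_carrier[OF Xc] Xc w] by simp
  finally show ?thesis using XhX w by simp
qed

definition orthonormal_basis :: "nat \<Rightarrow> (nat \<Rightarrow> complex vec) \<Rightarrow> bool" where
  "orthonormal_basis N f \<longleftrightarrow> (\<forall>k\<in>{1..N}. f k \<in> carrier_vec N) \<and>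
     (\<forall>k\<in>{1..N}. \<forall>m\<in>{1..N}. f k \<bullet>c f m = (if k = m then 1 else 0))"

definition basis_mat :: "nat \<Rightarrow> (nat \<Rightarrow> complex vec) \<Rightarrow> complex mat" where
  "basis_mat N f = mat N N (\<lambda>(i,k). f (Suc k) $ i)"

lemma unitary_basis_mat:
  assumes "orthonormal_basis N f"
  shows "unitary_mat N (basis_mat N f)"
proof -
  have B: "basis_mat N f \<in> carrier_mat N N" unfolding basis_mat_def by simp
  have "mat_adjoint (basis_mat N f) * basis_mat N f = 1\<^sub>m N"
  proof (rule eq_matI)
    fix k m assume "k < dim_row (1\<^sub>m N :: complex mat)" "m < dim_col (1\<^sub>m N :: complex mat)"
    then have km: "k < N" "m < N" by simp_all
    have "(mat_adjoint (basis_mat N f) * basis_mat N f) $$ (k,m) =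
        (\<Sum>l<N. f (Suc m) $ l * cnj (f (Suc k) $ l))"
      using km B by (subst index_mult_mat_sum[OF mat_adjoint_carrier[OF B] B]) (simp_all add: basis_mat_def mult.commute)
    also have "\<dots> = f (Suc m) \<bullet>c f (Suc k)"
      using assms km by (intro cscalar_prod_sum[symmetric]) (auto simp: orthonormal_basis_def)
    also have "\<dots> = 1\<^sub>m N $$ (k,m)"
      using assms km by (auto simp: orthonormal_basis_def)
    finally show "(mat_adjoint (basis_mat N f) * basis_mat N f) $$ (k,m) = 1\<^sub>m N $$ (k,m)" .
  qed (simp_all add: basis_mat_def)
  with B show ?thesis unfolding unitary_mat_def by simp
qed

lemma orthonormal_basis_parseval:
  assumes f: "orthonormal_basis N f" and v: "v \<in> carrier_vec N"
  shows "complex_of_real (\<Sum>k=1..N. (cmod (v \<bullet>c f k))\<^sup>2) = v \<bullet>c v"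
proof -
  let ?Bh = "mat_adjoint (basis_mat N f)"
  have Bh: "unitary_mat N ?Bh" by (rule unitary_mat_adjoint[OF unitary_basis_mat[OF f]])
  have Bhc: "?Bh \<in> carrier_mat N N" using Bh unfolding unitary_mat_def by simp
  have coord: "(?Bh *\<^sub>v v) $ k = v \<bullet>c f (Suc k)" if k: "k < N" for k
  proof -
    have fk: "f (Suc k) \<in> carrier_vec N" using f k unfolding orthonormal_basis_def by simp
    have "(?Bh *\<^sub>v v) $ k = (\<Sum>l<N. ?Bh $$ (k,l) * v $ l)"
      by (rule index_mult_mat_vec_sum[OF Bhc v k])
    also have "\<dots> = (\<Sum>l<N. v $ l * cnj (f (Suc k) $ l))"
      using k by (intro sum.cong) (simp_all add: basis_mat_def mult.commute)
    also have "\<dots> = v \<bullet>c f (Suc k)" by (rule cscalar_prod_sum[OF v fk, symmetric])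
    finally show ?thesis .
  qed
  have "complex_of_real (\<Sum>k=1..N. (cmod (v \<bullet>c f k))\<^sup>2) = (\<Sum>k<N. (?Bh *\<^sub>v v) $ k * cnj ((?Bh *\<^sub>v v) $ k))"
    by (simp add: sum.atLeast1_atMost_eq coord complex_norm_square del: of_real_power)
  also have "\<dots> = (?Bh *\<^sub>v v) \<bullet>c (?Bh *\<^sub>v v)"
    using Bhc v by (simp add: cscalar_prod_sum[of _ N])
  also have "\<dots> = v \<bullet>c v" by (rule unitary_cscalar_prod[OF Bh v v])
  finally show ?thesis .
qed

lemma has_field_derivative_zero_Icc_const:
  fixes f :: "real \<Rightarrow> real"
  assumes "a \<le> b" "\<And>t. t \<in> {a..b} \<Longrightarrow> (f has_field_derivative 0) (at t within {a..b})"
  shows "f b = f a"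
proof (cases "a < b")
  case True
  have "continuous_on {a..b} f"
    using assms(2) DERIV_continuous continuous_on_eq_continuous_within by blast
  moreover have "DERIV f t :> 0" if "a < t" "t < b" for t
    using assms(2)[of t] that at_within_Icc_at[of a t b] by simp
  ultimately show ?thesis using DERIV_isconst_end[OF True] by blast
qed (use assms(1) in simp)

lemma has_vector_derivative_zero_Icc_const:
  fixes f :: "real \<Rightarrow> complex"
  assumes "a \<le> b" "\<And>t. t \<in> {a..b} \<Longrightarrow> (f has_vector_derivative 0) (at t within {a..b})"
  shows "f b = f a"
proof -
  have "Re (f b) = Re (f a)"
    by (rule has_field_derivative_zero_Icc_const[OF assms(1)])
      (use has_field_derivative_Re[OF assms(2)] in simp)
  moreover have "Im (f b) = Im (f a)"
    by (rule has_field_derivative_zero_Icc_const[OF assms(1)])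
      (use has_field_derivative_Im[OF assms(2)] in simp)
  ultimately show ?thesis by (simp add: complex_eq_iff)
qed

lemma hermitian_mat_cnj:
  assumes "hermitian_mat N A" "i < N" "j < N"
  shows "cnj (A $$ (i,j)) = A $$ (j,i)"
proof -
  have "A \<in> carrier_mat N N" "mat_adjoint A = A" using assms(1) unfolding hermitian_mat_def by auto
  then show ?thesis using assms(2,3) index_mat_adjoint[of j A i] by simp
qed

text \<open>If \<open>U' = c H U\<close> with \<open>H\<close> Hermitian and \<open>c\<close> imaginary, then
  \<open>(U\<^sup>\<dagger>U)' = (c + cnj c) U\<^sup>\<dagger>HU = 0\<close>.\<close>

lemma gram_derivative_eq_zero:
  fixes H U D :: "complex mat" and c :: complex
  assumes H: "hermitian_mat N H" and c: "cnj c = - c"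
    and D: "\<And>l k. l < N \<Longrightarrow> k < N \<Longrightarrow> D $$ (l,k) = c * (\<Sum>r<N. H $$ (l,r) * U $$ (r,k))"
    and ij: "i < N" "j < N"
  shows "(\<Sum>l<N. cnj (U $$ (l,i)) * D $$ (l,j) + cnj (D $$ (l,i)) * U $$ (l,j)) = 0"
proof -
  let ?X = "\<Sum>l<N. \<Sum>r<N. cnj (U $$ (l,i)) * H $$ (l,r) * U $$ (r,j)"
  have "(\<Sum>l<N. cnj (U $$ (l,i)) * D $$ (l,j)) = c * ?X"
    using D ij by (simp add: sum_distrib_left mult_ac)
  moreover have "(\<Sum>l<N. cnj (D $$ (l,i)) * U $$ (l,j)) =
      (\<Sum>l<N. \<Sum>r<N. cnj c * (cnj (U $$ (r,i)) * H $$ (r,l) * U $$ (l,j)))"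
    using D ij hermitian_mat_cnj[OF H] by (simp add: sum_distrib_left sum_distrib_right mult_ac)
  moreover have "\<dots> = cnj c * ?X"
    by (subst sum.swap) (simp add: sum_distrib_left)
  ultimately show ?thesis using c by (simp add: sum.distrib)
qed

lemma unitary_mat_of_schroedinger:
  fixes N :: nat and hbar tau :: real and H U U' :: "real \<Rightarrow> complex mat"
  assumes hbar_pos: "hbar > 0" and tau_nonneg: "0 \<le> tau"
    and herm: "\<And>t. t \<in> {0..tau} \<Longrightarrow> hermitian_mat N (H t)"
    and U_carrier: "\<And>t. t \<in> {0..tau} \<Longrightarrow> U t \<in> carrier_mat N N"
    and U_deriv: "\<And>t. t \<in> {0..tau} \<Longrightarrow> mat_has_derivative_within N U (U' t) t {0..tau}"
    and schroedinger: "\<And>t. t \<in> {0..tau} \<Longrightarrow> (\<i> * complex_of_real hbar) \<cdot>\<^sub>m U' t = H t * U t"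
    and U_init: "U 0 = 1\<^sub>m N"
  shows "unitary_mat N (U tau)"
proof -
  define c where "c = 1 / (\<i> * complex_of_real hbar)"
  have c: "cnj c = - c" unfolding c_def by (simp add: divide_simps)
  have U': "U' t $$ (l,k) = c * (\<Sum>r<N. H t $$ (l,r) * U t $$ (r,k))"
    if t: "t \<in> {0..tau}" and lk: "l < N" "k < N" for t l k
  proof -
    have "U' t \<in> carrier_mat N N" using U_deriv[OF t] unfolding mat_has_derivative_within_def by simp
    moreover have "H t \<in> carrier_mat N N" using herm[OF t] unfolding hermitian_mat_def by simp
    moreover have "((\<i> * complex_of_real hbar) \<cdot>\<^sub>m U' t) $$ (l,k) = (H t * U t) $$ (l,k)"
      using schroedinger[OF t] by simp
    ultimately have "\<i> * complex_of_real hbar * U' t $$ (l,k) = (\<Sum>r<N. H t $$ (l,r) * U t $$ (r,k))"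
      using lk U_carrier[OF t] by (simp add: index_mult_mat_sum del: index_mult_mat)
    then show ?thesis unfolding c_def using hbar_pos by (simp add: field_simps)
  qed
  have gram_const: "(\<Sum>l<N. cnj (U tau $$ (l,i)) * U tau $$ (l,j)) = (\<Sum>l<N. cnj (U 0 $$ (l,i)) * U 0 $$ (l,j))"
    if ij: "i < N" "j < N" for i j
  proof (rule has_vector_derivative_zero_Icc_const[OF tau_nonneg])
    fix t assume t: "t \<in> {0..tau}"
    have "((\<lambda>s. U s $$ (a,b)) has_vector_derivative U' t $$ (a,b)) (at t within {0..tau})"
      if "a < N" "b < N" for a b
      using U_deriv[OF t] that unfolding mat_has_derivative_within_def by simp
    then have "((\<lambda>s. \<Sum>l<N. cnj (U s $$ (l,i)) * U s $$ (l,j)) has_vector_derivative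
        (\<Sum>l<N. cnj (U t $$ (l,i)) * U' t $$ (l,j) + cnj (U' t $$ (l,i)) * U t $$ (l,j)))
        (at t within {0..tau})"
      using ij by (intro has_vector_derivative_sum has_vector_derivative_mult has_vector_derivative_cnj) simp_all
    then show "((\<lambda>s. \<Sum>l<N. cnj (U s $$ (l,i)) * U s $$ (l,j)) has_vector_derivative 0)
        (at t within {0..tau})"
      using gram_derivative_eq_zero[OF herm[OF t] c U'[OF t] ij] by simp
  qed
  have U\<tau>: "U tau \<in> carrier_mat N N" using U_carrier tau_nonneg by simp
  have "mat_adjoint (U tau) * U tau = 1\<^sub>m N"
  proof (rule eq_matI)
    fix i j assume "i < dim_row (1\<^sub>m N :: complex mat)" "j < dim_col (1\<^sub>m N :: complex mat)"
    then have ij: "i < N" "j < N" by simp_all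
    have "(mat_adjoint (U tau) * U tau) $$ (i,j) = (\<Sum>l<N. cnj (U tau $$ (l,i)) * U tau $$ (l,j))"
      using ij U\<tau> by (simp add: index_mult_mat_sum[OF mat_adjoint_carrier[OF U\<tau>] U\<tau>] del: index_mult_mat)
    also have "\<dots> = 1\<^sub>m N $$ (i,j)"
      using gram_const[OF ij] ij by (simp add: U_init if_distrib cong: if_cong)
    finally show "(mat_adjoint (U tau) * U tau) $$ (i,j) = 1\<^sub>m N $$ (i,j)" .
  qed (use U\<tau> in auto)
  with U\<tau> show ?thesis unfolding unitary_mat_def by simp
qed

lemma index_spectral_sum:
  "i < N \<Longrightarrow> j < N \<Longrightarrow> spectral_sum N c v $$ (i,j) = (\<Sum>k=1..N. c k * v k $ i * cnj (v k $ j))"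
  unfolding spectral_sum_def by simp

lemma dim_row_spectral_sum [simp]: "dim_row (spectral_sum N c v) = N"
  and dim_col_spectral_sum [simp]: "dim_col (spectral_sum N c v) = N"
  unfolding spectral_sum_def by simp_all

lemma spectral_sum_carrier: "spectral_sum N c v \<in> carrier_mat N N"
  by (simp add: carrier_matI)

lemma mult_spectral_sum_mat_adjoint:
  assumes V: "V \<in> carrier_mat N N" and v: "\<And>k. k \<in> {1..N} \<Longrightarrow> v k \<in> carrier_vec N"
  shows "V * spectral_sum N c v * mat_adjoint V = spectral_sum N c (\<lambda>k. V *\<^sub>v v k)"
proof (rule eq_matI)
  fix i j assume "i < dim_row (spectral_sum N c (\<lambda>k. V *\<^sub>v v k))"
    "j < dim_col (spectral_sum N c (\<lambda>k. V *\<^sub>v v k))"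
  then have ij: "i < N" "j < N" by (simp_all add: spectral_sum_def)
  have VS: "V * spectral_sum N c v \<in> carrier_mat N N" using V spectral_sum_carrier by simp
  have "(V * spectral_sum N c v * mat_adjoint V) $$ (i,j) =
      (\<Sum>r<N. \<Sum>l<N. \<Sum>k=1..N. c k * (V $$ (i,l) * v k $ l) * cnj (V $$ (j,r) * v k $ r))"
    using V ij
    by (simp add: index_mult_mat_sum[OF VS mat_adjoint_carrier[OF V]]
        index_mult_mat_sum[OF V spectral_sum_carrier] index_spectral_sum
        sum_distrib_left sum_distrib_right mult_ac del: index_mult_mat)
  also have "\<dots> = (\<Sum>k=1..N. \<Sum>r<N. \<Sum>l<N. c k * (V $$ (i,l) * v k $ l) * cnj (V $$ (j,r) * v k $ r))"
    by (simp only: sum.swap[of _ "{..<N}" "{1..N}"])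
  also have "\<dots> = spectral_sum N c (\<lambda>k. V *\<^sub>v v k) $$ (i,j)"
    using V v ij
    by (simp add: index_spectral_sum index_mult_mat_vec_sum sum_distrib_left sum_distrib_right
        del: index_mult_mat_vec)
  finally show "(V * spectral_sum N c v * mat_adjoint V) $$ (i,j) = spectral_sum N c (\<lambda>k. V *\<^sub>v v k) $$ (i,j)" .
qed (use V in simp_all)

lemma Re_mat_trace_mult_spectral_sum:
  fixes c d :: "nat \<Rightarrow> real"
  assumes v: "\<And>k. k \<in> {1..N} \<Longrightarrow> v k \<in> carrier_vec N"
    and w: "\<And>k. k \<in> {1..N} \<Longrightarrow> w k \<in> carrier_vec N"
  shows "Re (mat_trace (spectral_sum N (\<lambda>k. complex_of_real (c k)) v * spectral_sum N (\<lambda>m. complex_of_real (d m)) w)) =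
    (\<Sum>k=1..N. \<Sum>m=1..N. c k * d m * (cmod (v k \<bullet>c w m))\<^sup>2)"
proof -
  let ?T = "\<lambda>i l k m. complex_of_real (c k * d m) * (v k $ i * cnj (w m $ i)) * cnj (v k $ l * cnj (w m $ l))"
  let ?C = "spectral_sum N (\<lambda>k. complex_of_real (c k)) v"
    and ?D = "spectral_sum N (\<lambda>m. complex_of_real (d m)) w"
  have "mat_trace (?C * ?D) = (\<Sum>i<N. (?C * ?D) $$ (i,i))"
    unfolding mat_trace_def by simp
  also have "\<dots> = (\<Sum>i<N. \<Sum>l<N. \<Sum>m=1..N. \<Sum>k=1..N. ?T i l k m)"
    by (intro sum.cong refl)
      (simp add: index_mult_mat_sum[OF spectral_sum_carrier spectral_sum_carrier] index_spectral_sum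
        sum_distrib_left sum_distrib_right mult_ac del: index_mult_mat)
  also have "\<dots> = (\<Sum>m=1..N. \<Sum>k=1..N. \<Sum>i<N. \<Sum>l<N. ?T i l k m)"
    by (simp only: sum.swap[of _ "{..<N}" "{1..N}"])
  also have "\<dots> = (\<Sum>k=1..N. \<Sum>m=1..N. \<Sum>i<N. \<Sum>l<N. ?T i l k m)"
    by (rule sum.swap)
  also have "\<dots> = (\<Sum>k=1..N. \<Sum>m=1..N. complex_of_real (c k * d m) * ((v k \<bullet>c w m) * cnj (v k \<bullet>c w m)))"
    by (intro sum.cong refl)
      (simp add: cscalar_prod_sum[OF v w] sum_distrib_left sum_distrib_right mult_ac, rule sum.swap)
  also have "\<dots> = complex_of_real (\<Sum>k=1..N. \<Sum>m=1..N. c k * d m * (cmod (v k \<bullet>c w m))\<^sup>2)"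
    by (simp add: complex_norm_square del: of_real_power)
  finally show ?thesis by simp
qed

definition doubly_stochastic :: "nat \<Rightarrow> (nat \<Rightarrow> nat \<Rightarrow> real) \<Rightarrow> bool" where
  "doubly_stochastic N M \<longleftrightarrow> (\<forall>q\<in>{1..N}. \<forall>j\<in>{1..N}. 0 \<le> M q j) \<and>
     (\<forall>q\<in>{1..N}. (\<Sum>j=1..N. M q j) = 1) \<and> (\<forall>j\<in>{1..N}. (\<Sum>q=1..N. M q j) = 1)"

lemma transition_doubly_stochastic:
  assumes V: "unitary_mat N V" and a: "orthonormal_basis N a" and b: "orthonormal_basis N b"
  shows "doubly_stochastic N (\<lambda>m k. (cmod ((V *\<^sub>v a k) \<bullet>c b m))\<^sup>2)"
proof -
  have Vc: "V \<in> carrier_mat N N" using V unfolding unitary_mat_def by simp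
  have Vh: "unitary_mat N (mat_adjoint V)" by (rule unitary_mat_adjoint[OF V])
  have ac: "a k \<in> carrier_vec N" and bc: "b k \<in> carrier_vec N" if "k \<in> {1..N}" for k
    using a b that unfolding orthonormal_basis_def by auto
  have unit: "a k \<bullet>c a k = 1" "b k \<bullet>c b k = 1" if "k \<in> {1..N}" for k
    using a b that unfolding orthonormal_basis_def by auto
  have col: "(\<Sum>m=1..N. (cmod ((V *\<^sub>v a k) \<bullet>c b m))\<^sup>2) = 1" if k: "k \<in> {1..N}" for k
  proof -
    have "complex_of_real (\<Sum>m=1..N. (cmod ((V *\<^sub>v a k) \<bullet>c b m))\<^sup>2) = (V *\<^sub>v a k) \<bullet>c (V *\<^sub>v a k)"
      using Vc ac[OF k] by (intro orthonormal_basis_parseval[OF b]) simp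
    also have "\<dots> = 1" using unitary_cscalar_prod[OF V ac[OF k] ac[OF k]] unit[OF k] by simp
    finally show ?thesis by (metis of_real_eq_1_iff)
  qed
  have row: "(\<Sum>k=1..N. (cmod ((V *\<^sub>v a k) \<bullet>c b m))\<^sup>2) = 1" if m: "m \<in> {1..N}" for m
  proof -
    let ?w = "mat_adjoint V *\<^sub>v b m"
    have wc: "?w \<in> carrier_vec N" using mult_mat_vec_carrier[OF mat_adjoint_carrier[OF Vc] bc[OF m]] .
    have "cmod ((V *\<^sub>v a k) \<bullet>c b m) = cmod (?w \<bullet>c a k)" if k: "k \<in> {1..N}" for k
      using cscalar_prod_mult_mat_vec[OF Vc ac[OF k] bc[OF m]]
        cmod_cscalar_prod_commute[OF ac[OF k] wc] by simp
    then have "complex_of_real (\<Sum>k=1..N. (cmod ((V *\<^sub>v a k) \<bullet>c b m))\<^sup>2) = ?w \<bullet>c ?w"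
      using orthonormal_basis_parseval[OF a wc] by simp
    also have "\<dots> = 1" using unitary_cscalar_prod[OF Vh bc[OF m] bc[OF m]] unit[OF m] by simp
    finally show ?thesis by (metis of_real_eq_1_iff)
  qed
  show ?thesis unfolding doubly_stochastic_def using col row by simp
qed

lemma sum_mult_antitone_ge:
  fixes p y :: "nat \<Rightarrow> real"
  assumes p: "antimono_on {1..n} p" and partial: "\<And>m. m \<le> n \<Longrightarrow> 0 \<le> (\<Sum>j=1..m. y j)"
  shows "p n * (\<Sum>j=1..n. y j) \<le> (\<Sum>j=1..n. p j * y j)"
  using assms
proof (induction n)
  case 0
  then show ?case by simp
next
  case (Suc n)
  have IH: "p n * (\<Sum>j=1..n. y j) \<le> (\<Sum>j=1..n. p j * y j)"
    using Suc.prems by (intro Suc.IH) (auto intro: monotone_on_subset)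
  have "p (Suc n) * (\<Sum>j=1..n. y j) \<le> p n * (\<Sum>j=1..n. y j)"
  proof (cases "n = 0")
    case False
    then have "p (Suc n) \<le> p n" using monotone_onD[OF Suc.prems(1), of n "Suc n"] by simp
    then show ?thesis using Suc.prems(2)[of n] by (simp add: mult_right_mono)
  qed simp
  then show ?case using IH by (simp add: distrib_left)
qed

lemma sum_initial_le_weighted_sum:
  fixes x w :: "nat \<Rightarrow> real"
  assumes x: "mono_on {1..N} x"
    and w: "\<And>k. k \<in> {1..N} \<Longrightarrow> 0 \<le> w k \<and> w k \<le> 1"
    and w_sum: "(\<Sum>k=1..N. w k) = real m" and m: "m \<in> {1..N}"
  shows "(\<Sum>k=1..m. x k) \<le> (\<Sum>k=1..N. x k * w k)"
proof -
  define ind where "ind k = (if k \<le> m then 1 else 0 :: real)" for k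
  have "{1..N} \<inter> {k. k \<le> m} = {1..m}" using m by auto
  then have ind_x: "(\<Sum>k=1..N. x k * ind k) = (\<Sum>k=1..m. x k)" and ind_sum: "(\<Sum>k=1..N. ind k) = real m"
    by (simp_all add: ind_def if_distrib sum.If_cases)
  have "0 \<le> (\<Sum>k=1..N. (x k - x m) * (w k - ind k))"
  proof (rule sum_nonneg)
    fix k assume k: "k \<in> {1..N}"
    show "0 \<le> (x k - x m) * (w k - ind k)"
    proof (cases "k \<le> m")
      case True
      then have "x k \<le> x m" using x k m by (auto intro: mono_onD)
      then show ?thesis using True w[OF k] by (simp add: ind_def mult_nonpos_nonpos)
    next
      case False
      then have "x m \<le> x k" using x k m by (auto intro: mono_onD)
      then show ?thesis using False w[OF k] by (simp add: ind_def)
    qed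
  qed
  also have "\<dots> = (\<Sum>k=1..N. x k * w k) - (\<Sum>k=1..N. x k * ind k) - x m * (\<Sum>k=1..N. w k) + x m * (\<Sum>k=1..N. ind k)"
    by (simp add: algebra_simps sum.distrib sum_subtractf sum_distrib_left)
  finally show ?thesis using w_sum ind_x ind_sum by simp
qed

lemma doubly_stochastic_majorization:
  fixes x p :: "nat \<Rightarrow> real"
  assumes M: "doubly_stochastic N M" and x: "mono_on {1..N} x"
    and p_nonneg: "\<And>k. k \<in> {1..N} \<Longrightarrow> 0 \<le> p k" and p: "antimono_on {1..N} p"
  shows "(\<Sum>j=1..N. x j * p j) \<le> (\<Sum>q=1..N. x q * (\<Sum>j=1..N. M q j * p j))"
proof -
  define y where "y j = (\<Sum>q=1..N. x q * M q j) - x j" for j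
  have partial: "0 \<le> (\<Sum>j=1..m. y j)" if m: "m \<le> N" for m
  proof (cases "m = 0")
    case False
    define w where "w q = (\<Sum>j=1..m. M q j)" for q
    have w: "0 \<le> w q \<and> w q \<le> 1" if q: "q \<in> {1..N}" for q
    proof
      show "0 \<le> w q" unfolding w_def using M q m by (intro sum_nonneg) (auto simp: doubly_stochastic_def)
      have "w q \<le> (\<Sum>j=1..N. M q j)" unfolding w_def using M q m
        by (intro sum_mono2) (auto simp: doubly_stochastic_def)
      then show "w q \<le> 1" using M q by (simp add: doubly_stochastic_def)
    qed
    have "(\<Sum>q=1..N. w q) = (\<Sum>j=1..m. \<Sum>q=1..N. M q j)" unfolding w_def by (rule sum.swap)
    also have "\<dots> = real m" using M m by (simp add: doubly_stochastic_def)
    finally have "(\<Sum>k=1..m. x k) \<le> (\<Sum>k=1..N. x k * w k)"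
      using False m by (intro sum_initial_le_weighted_sum[OF x w]) simp_all
    moreover have "(\<Sum>j=1..m. \<Sum>q=1..N. x q * M q j) = (\<Sum>k=1..N. x k * w k)"
      unfolding w_def sum_distrib_left by (rule sum.swap)
    then have "(\<Sum>j=1..m. y j) = (\<Sum>k=1..N. x k * w k) - (\<Sum>k=1..m. x k)"
      unfolding y_def by (simp add: sum_subtractf)
    ultimately show ?thesis by simp
  qed simp
  have "0 \<le> p N * (\<Sum>j=1..N. y j)"
    using p_nonneg[of N] partial[of N] by (cases N) simp_all
  also have "\<dots> \<le> (\<Sum>j=1..N. p j * y j)" by (rule sum_mult_antitone_ge[OF p partial])
  also have "\<dots> = (\<Sum>j=1..N. \<Sum>q=1..N. p j * (x q * M q j)) - (\<Sum>j=1..N. x j * p j)"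
    unfolding y_def by (simp add: right_diff_distrib sum_subtractf sum_distrib_left mult_ac)
  also have "(\<Sum>j=1..N. \<Sum>q=1..N. p j * (x q * M q j)) = (\<Sum>q=1..N. x q * (\<Sum>j=1..N. M q j * p j))"
    by (subst sum.swap) (simp add: sum_distrib_left mult_ac)
  finally show ?thesis by simp
qed

definition degset_mean :: "nat \<Rightarrow> (real \<Rightarrow> nat \<Rightarrow> real) \<Rightarrow> real \<Rightarrow> (nat \<Rightarrow> real) \<Rightarrow> nat \<Rightarrow> real" where
  "degset_mean N eps l f k = (\<Sum>q\<in>degset N eps l k. f q) / real (degeneracy N eps l k)"

lemma degset_subset: "degset N eps l k \<subseteq> {1..N}"
  unfolding degset_def by auto

lemma finite_degset: "finite (degset N eps l k)"
  by (rule finite_subset[OF degset_subset]) simp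

lemma degset_self: "k \<in> {1..N} \<Longrightarrow> k \<in> degset N eps l k"
  unfolding degset_def by simp

lemma degeneracy_pos: "k \<in> {1..N} \<Longrightarrow> 0 < degeneracy N eps l k"
  unfolding degeneracy_def using degset_self finite_degset by (metis card_gt_0_iff empty_iff)

lemma degset_mean_eq_self:
  assumes k: "k \<in> {1..N}" and const: "\<And>q. q \<in> degset N eps l k \<Longrightarrow> f q = f k"
  shows "degset_mean N eps l f k = f k"
proof -
  have "(\<Sum>q\<in>degset N eps l k. f q) = (\<Sum>q\<in>degset N eps l k. f k)"
    by (rule sum.cong) (simp_all add: const)
  then show ?thesis
    using degeneracy_pos[OF k, of eps l] unfolding degset_mean_def degeneracy_def by simp
qed

lemma degset_mean_sum_mult:
  "degset_mean N eps l (\<lambda>m. \<Sum>k\<in>K. f m k * c k) q = (\<Sum>k\<in>K. degset_mean N eps l (\<lambda>m. f m k) q * c k)"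
  unfolding degset_mean_def
  by (simp add: sum_divide_distrib sum_distrib_left sum_distrib_right sum.swap[of _ K] mult_ac)

lemma sum_mult_degset_mean_swap:
  "(\<Sum>k=1..N. y k * degset_mean N eps l x k) = (\<Sum>q=1..N. x q * degset_mean N eps l y q)"
proof -
  let ?g = "\<lambda>k. real (degeneracy N eps l k)"
  have "(\<Sum>k=1..N. y k * degset_mean N eps l x k) = (\<Sum>k=1..N. \<Sum>q\<in>degset N eps l k. y k * x q / ?g k)"
    unfolding degset_mean_def by (simp add: sum_distrib_left sum_divide_distrib)
  also have "\<dots> = (\<Sum>q=1..N. \<Sum>k\<in>{k. k \<in> {1..N} \<and> eps l q = eps l k}. y k * x q / ?g k)"
    unfolding degset_def by (rule sum.swap_restrict) simp_all
  also have "\<dots> = (\<Sum>q=1..N. \<Sum>k\<in>degset N eps l q. y k * x q / ?g q)"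
  proof (rule sum.cong[OF refl])
    fix q
    have "{k. k \<in> {1..N} \<and> eps l q = eps l k} = degset N eps l q" unfolding degset_def by auto
    moreover have "degeneracy N eps l k = degeneracy N eps l q" if "k \<in> degset N eps l q" for k
      using that unfolding degeneracy_def degset_def by simp
    ultimately show "(\<Sum>k\<in>{k. k \<in> {1..N} \<and> eps l q = eps l k}. y k * x q / ?g k) =
        (\<Sum>k\<in>degset N eps l q. y k * x q / ?g q)"
      by (auto intro: sum.cong)
  qed
  also have "\<dots> = (\<Sum>q=1..N. x q * degset_mean N eps l y q)"
    unfolding degset_mean_def by (simp add: sum_distrib_left sum_divide_distrib mult.commute)
  finally show ?thesis .
qed

lemma doubly_stochastic_degset_mean:
  assumes M: "doubly_stochastic N M"
  shows "doubly_stochastic N (\<lambda>q k. degset_mean N eps l (\<lambda>m. M m k) q)"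
proof -
  have nonneg: "0 \<le> M m k" and row: "(\<Sum>j=1..N. M m j) = 1" and col: "(\<Sum>q=1..N. M q k) = 1"
    if "m \<in> {1..N}" "k \<in> {1..N}" for m k
    using M that unfolding doubly_stochastic_def by auto
  have in_range: "m \<in> {1..N}" if "m \<in> degset N eps l q" for m q
    using that degset_subset[of N eps l q] by blast
  have "0 \<le> degset_mean N eps l (\<lambda>m. M m k) q" if "k \<in> {1..N}" for q k
    unfolding degset_mean_def using nonneg[OF in_range that] by (simp add: sum_nonneg)
  moreover have "(\<Sum>k=1..N. degset_mean N eps l (\<lambda>m. M m k) q) = 1" if q: "q \<in> {1..N}" for q
  proof -
    have "(\<Sum>k=1..N. degset_mean N eps l (\<lambda>m. M m k) q) = degset_mean N eps l (\<lambda>m. \<Sum>k=1..N. M m k) q"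
      using degset_mean_sum_mult[where f = M and c = "\<lambda>_. 1"] by simp
    also have "\<dots> = (\<Sum>k=1..N. M q k)"
      using row[OF in_range q] row[OF q q] by (intro degset_mean_eq_self[OF q]) simp
    finally show ?thesis using row[OF q q] by simp
  qed
  moreover have "(\<Sum>q=1..N. degset_mean N eps l (\<lambda>m. M m k) q) = 1" if k: "k \<in> {1..N}" for k
  proof -
    have "(\<Sum>q=1..N. degset_mean N eps l (\<lambda>m. M m k) q) = (\<Sum>m=1..N. M m k * degset_mean N eps l (\<lambda>_. 1) m)"
      using sum_mult_degset_mean_swap[where y = "\<lambda>_. 1" and x = "\<lambda>m. M m k"] by simp
    also have "\<dots> = (\<Sum>m=1..N. M m k)"
      by (intro sum.cong refl) (simp add: degset_mean_eq_self)
    finally show ?thesis using col[OF k k] by simp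
  qed
  ultimately show ?thesis unfolding doubly_stochastic_def by blast
qed

lemma ln_geomlabel: "ln (geomlabel N eps l k) = degset_mean N eps l (\<lambda>q. ln (real q)) k"
proof -
  have "ln (\<Prod>q\<in>degset N eps l k. real q) = (\<Sum>q\<in>degset N eps l k. ln (real q))"
    using finite_degset degset_subset by (intro ln_prod) fastforce+
  then show ?thesis unfolding geomlabel_def degset_mean_def by simp
qed

lemma sum_ln_geomlabel_mult:
  "(\<Sum>m=1..N. ln (geomlabel N eps l m) * y m) = (\<Sum>q=1..N. ln (real q) * degset_mean N eps l y q)"
  using sum_mult_degset_mean_swap[where x = "\<lambda>q. ln (real q)"] by (simp add: ln_geomlabel mult.commute)

lemma Re_mat_trace_spectral_sum_entropy_op:
  assumes basis: "orthonormal_basis N (psi l)"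
    and p: "\<And>k m. k \<in> {1..N} \<Longrightarrow> m \<in> degset N eps l k \<Longrightarrow> p k = p m"
  shows "Re (mat_trace (spectral_sum N (\<lambda>k. complex_of_real (p k)) (psi l) * entropy_op N eps psi l)) =
    (\<Sum>q=1..N. ln (real q) * p q)"
proof -
  have psi: "\<And>k. k \<in> {1..N} \<Longrightarrow> psi l k \<in> carrier_vec N"
    and orth: "\<And>k m. k \<in> {1..N} \<Longrightarrow> m \<in> {1..N} \<Longrightarrow> psi l k \<bullet>c psi l m = (if k = m then 1 else 0)"
    using basis unfolding orthonormal_basis_def by auto
  have diagonal: "p k * ln (geomlabel N eps l m) * (cmod (psi l k \<bullet>c psi l m))\<^sup>2 =
      (if m = k then ln (geomlabel N eps l m) * p k else 0)" if "k \<in> {1..N}" "m \<in> {1..N}" for k m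
    using orth[OF that] by simp
  have "Re (mat_trace (spectral_sum N (\<lambda>k. complex_of_real (p k)) (psi l) * entropy_op N eps psi l)) =
      (\<Sum>k=1..N. \<Sum>m=1..N. p k * ln (geomlabel N eps l m) * (cmod (psi l k \<bullet>c psi l m))\<^sup>2)"
    unfolding entropy_op_def
    by (rule Re_mat_trace_mult_spectral_sum[OF psi psi, where c = p and d = "\<lambda>m. ln (geomlabel N eps l m)"])
  also have "\<dots> = (\<Sum>k=1..N. ln (geomlabel N eps l k) * p k)"
    by (intro sum.cong refl) (simp add: diagonal)
  also have "\<dots> = (\<Sum>q=1..N. ln (real q) * degset_mean N eps l p q)"
    by (rule sum_ln_geomlabel_mult)
  also have "\<dots> = (\<Sum>q=1..N. ln (real q) * p q)"
    using p by (intro sum.cong refl) (simp add: degset_mean_eq_self)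
  finally show ?thesis .
qed

lemma Re_mat_trace_conj_entropy_op:
  assumes V: "V \<in> carrier_mat N N" and a: "\<And>k. k \<in> {1..N} \<Longrightarrow> a k \<in> carrier_vec N"
    and psi: "\<And>k. k \<in> {1..N} \<Longrightarrow> psi l k \<in> carrier_vec N"
  shows "Re (mat_trace (V * spectral_sum N (\<lambda>k. complex_of_real (p k)) a * mat_adjoint V * entropy_op N eps psi l)) =
    (\<Sum>q=1..N. ln (real q) *
      (\<Sum>k=1..N. degset_mean N eps l (\<lambda>m. (cmod ((V *\<^sub>v a k) \<bullet>c psi l m))\<^sup>2) q * p k))"
proof -
  let ?D = "\<lambda>m k. (cmod ((V *\<^sub>v a k) \<bullet>c psi l m))\<^sup>2"
  have conj: "V * spectral_sum N (\<lambda>k. complex_of_real (p k)) a * mat_adjoint V =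
      spectral_sum N (\<lambda>k. complex_of_real (p k)) (\<lambda>k. V *\<^sub>v a k)"
    by (rule mult_spectral_sum_mat_adjoint[OF V a])
  have Va: "\<And>k. k \<in> {1..N} \<Longrightarrow> V *\<^sub>v a k \<in> carrier_vec N" using V a by simp
  have "Re (mat_trace (V * spectral_sum N (\<lambda>k. complex_of_real (p k)) a * mat_adjoint V * entropy_op N eps psi l)) =
      (\<Sum>k=1..N. \<Sum>m=1..N. p k * ln (geomlabel N eps l m) * ?D m k)"
    unfolding entropy_op_def conj
    by (rule Re_mat_trace_mult_spectral_sum[OF Va psi, where c = p and d = "\<lambda>m. ln (geomlabel N eps l m)"])
  also have "\<dots> = (\<Sum>m=1..N. \<Sum>k=1..N. p k * ln (geomlabel N eps l m) * ?D m k)"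
    by (rule sum.swap)
  also have "\<dots> = (\<Sum>m=1..N. ln (geomlabel N eps l m) * (\<Sum>k=1..N. ?D m k * p k))"
    unfolding sum_distrib_left by (simp only: mult_ac)
  also have "\<dots> = (\<Sum>q=1..N. ln (real q) * (\<Sum>k=1..N. degset_mean N eps l (\<lambda>m. ?D m k) q * p k))"
    unfolding sum_ln_geomlabel_mult degset_mean_sum_mult ..
  finally show ?thesis .
qed

theorem theorem2:
  fixes N :: nat and hbar tau :: real
    and H :: "real \<Rightarrow> complex mat"
    and lam :: "real \<Rightarrow> real"
    and U U' :: "real \<Rightarrow> complex mat"
    and psi :: "real \<Rightarrow> nat \<Rightarrow> complex vec"
    and eps :: "real \<Rightarrow> nat \<Rightarrow> real"
    and p :: "nat \<Rightarrow> real"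
  assumes hbar_pos: "hbar > 0"
    and tau_nonneg: "0 \<le> tau"
    and herm: "\<And>l. hermitian_mat N (H l)"
    and U_carrier: "\<And>t. t \<in> {0..tau} \<Longrightarrow> U t \<in> carrier_mat N N"
    and U_deriv: "\<And>t. t \<in> {0..tau} \<Longrightarrow> mat_has_derivative_within N U (U' t) t {0..tau}"
    and schroedinger: "\<And>t. t \<in> {0..tau} \<Longrightarrow> (\<i> * complex_of_real hbar) \<cdot>\<^sub>m U' t = H (lam t) * U t"
    and U_init: "U 0 = 1\<^sub>m N"
    and psi_carrier: "\<And>l k. k \<in> {1..N} \<Longrightarrow> psi l k \<in> carrier_vec N"
    and psi_eigen: "\<And>l k. k \<in> {1..N} \<Longrightarrow> H l *\<^sub>v psi l k = complex_of_real (eps l k) \<cdot>\<^sub>v psi l k"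
    and psi_orthonormal: "\<And>l k m. k \<in> {1..N} \<Longrightarrow> m \<in> {1..N} \<Longrightarrow>
        psi l k \<bullet>c psi l m = (if k = m then 1 else 0)"
    and eps_ordered: "\<And>t k m. t \<in> {0..tau} \<Longrightarrow> k \<in> {1..N} \<Longrightarrow> m \<in> {1..N} \<Longrightarrow> m < k \<Longrightarrow>
        eps (lam t) m \<le> eps (lam t) k"
    and p_nonneg: "\<And>k. k \<in> {1..N} \<Longrightarrow> p k \<ge> 0"
    and p_sum: "(\<Sum>k=1..N. p k) = 1"
    and p_degenerate: "\<And>k m. k \<in> {1..N} \<Longrightarrow> m \<in> degset N eps (lam 0) k \<Longrightarrow> p k = p m"
    and p_ordered: "\<And>k m. k \<in> {1..N} \<Longrightarrow> m \<in> {1..N} \<Longrightarrow> m < k \<Longrightarrow> p k \<le> p m"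
  shows
    "let rho0 = spectral_sum N (\<lambda>k. complex_of_real (p k)) (psi (lam 0));
         rho = (\<lambda>t. U t * rho0 * mat_adjoint (U t));
         S = (\<lambda>t. Re (mat_trace (rho t * entropy_op N eps psi (lam t))))
     in S tau \<ge> S 0"
proof -
  define rho0 where "rho0 = spectral_sum N (\<lambda>k. complex_of_real (p k)) (psi (lam 0))"
  define M where "M q k = degset_mean N eps (lam tau)
    (\<lambda>m. (cmod ((U tau *\<^sub>v psi (lam 0) k) \<bullet>c psi (lam tau) m))\<^sup>2) q" for q k
  have basis: "orthonormal_basis N (psi l)" for l
    using psi_carrier psi_orthonormal unfolding orthonormal_basis_def by blast
  have "unitary_mat N (U tau)"
    by (rule unitary_mat_of_schroedinger[where H = "\<lambda>t. H (lam t)", OF hbar_pos tau_nonneg herm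
          U_carrier U_deriv schroedinger U_init])
  then have M: "doubly_stochastic N M"
    unfolding M_def by (intro doubly_stochastic_degset_mean transition_doubly_stochastic basis)
  have S_tau: "Re (mat_trace (U tau * rho0 * mat_adjoint (U tau) * entropy_op N eps psi (lam tau))) =
      (\<Sum>q=1..N. ln (real q) * (\<Sum>k=1..N. M q k * p k))"
    unfolding rho0_def M_def using tau_nonneg
    by (intro Re_mat_trace_conj_entropy_op U_carrier psi_carrier) simp_all
  have S_0: "Re (mat_trace (U 0 * rho0 * mat_adjoint (U 0) * entropy_op N eps psi (lam 0))) =
      (\<Sum>q=1..N. ln (real q) * p q)"
    using Re_mat_trace_spectral_sum_entropy_op[OF basis p_degenerate] by (simp add: U_init rho0_def)
  have p_antimono: "antimono_on {1..N} p"
  proof (rule monotone_onI)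
    fix j k assume "j \<in> {1..N}" "k \<in> {1..N}" "j \<le> k"
    then show "p k \<le> p j" using p_ordered[of k j] by (cases "j = k") auto
  qed
  have "(\<Sum>q=1..N. ln (real q) * p q) \<le> (\<Sum>q=1..N. ln (real q) * (\<Sum>k=1..N. M q k * p k))"
    by (rule doubly_stochastic_majorization[OF M _ p_nonneg p_antimono]) (rule mono_onI, simp)
  then show ?thesis unfolding Let_def rho0_def[symmetric] using S_tau S_0 by simp
qed

end
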